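(* Let $v\in\Sigma^*$, let $u$ be a $v$-minimal word, let $i\in\mathrm{supp}(u)$ and $g\in\mathcal{I}_i$. If a word $w$ $u$-represents $g$, then either $g=\theta_i(w)=0_i$ or $\mathrm{supp}(w)=\mathrm{supp}(u)$.
   Context: Let $\mathcal{A}=\langle Q,\Sigma,\delta\rangle$ be a synchronizing automaton with $n$ states $q_1,\dots,q_n$; write $q\cdot u$ for the action of $u\in\Sigma^*$ and $\mathrm{rk}(u)=|Q\cdot u|$. Each word acts linearly on $\mathbb{C}Q$ by $q\mapsto q\cdot u$, preserving $w^\perp=\{x:\langle x,q_1+\dots+q_n\rangle=0\}$; let $\rho:\Sigma^*\to\mathbb{M}_{n-1}(\mathbb{C})$ be the induced representation, $\mathcal{R}$ the $\mathbb{C}$-algebra generated by $\rho(\Sigma^* )$, $\mathrm{Rad}(\mathcal{A})=\rho^{-1}(\mathrm{Rad}(\mathcal{R}))$. Write $\mathcal{R}/\mathrm{Rad}(\mathcal{R})\cong\prod_{i=1}^k\mathbb{M}_{n_i}(\mathbb{C})$ and let $\theta_i:\Sigma^*\to\mathbb{M}_{n_i}(\mathbb{C})$ be $\rho$ followed by the quotient map and the $i$-th projection; $0_i$ is the zero matrix. The monoid $\theta_i(\Sigma^* )$ has a unique $0$-minimal ideal $\mathcal{I}_i$ (which contains $0_i$). The support of a word $z$ is $\mathrm{supp}(z)=\{i:\theta_i(z)\neq0_i\}$. For $v\in\Sigma^*$, a word $u\in\Sigma^*v\Sigma^*$ is $v$-minimal if $\mathrm{supp}(u)\neq\emptyset$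 and there is no $z\in\Sigma^*v\Sigma^*$ with $\emptyset\neq\mathrm{supp}(z)\subsetneq\mathrm{supp}(u)$. For such $u$, $i\in\mathrm{supp}(u)$ and $g\in\mathcal{I}_i$, a word $w$ $u$-represents $g$ if $w\in\Sigma^*u\Sigma^*$, $\theta_i(w)=g$, and either $g=0_i$ or $\mathrm{rk}(w)$ is minimum among all words $w'\in\Sigma^*u\Sigma^*$ with $\theta_i(w')=g$. *)

theory Defs
  imports "Jordan_Normal_Form.Matrix"
begin

(* States are 0,...,n-1 (q_1..q_n of the paper); the alphabet is a finite set Alph;
   words are lists; delta is the transition function. *)

definition act :: "(nat \<Rightarrow> 'a \<Rightarrow> nat) \<Rightarrow> nat \<Rightarrow> 'a list \<Rightarrow> nat" where
  "act \<delta> q u = foldl \<delta> q u"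

definition rk :: "nat \<Rightarrow> (nat \<Rightarrow> 'a \<Rightarrow> nat) \<Rightarrow> 'a list \<Rightarrow> nat" where
  "rk n \<delta> u = card ((\<lambda>q. act \<delta> q u) ` {..<n})"

definition automaton :: "nat \<Rightarrow> 'a set \<Rightarrow> (nat \<Rightarrow> 'a \<Rightarrow> nat) \<Rightarrow> bool" where
  "automaton n Alph \<delta> \<longleftrightarrow> n \<ge> 1 \<and> finite Alph \<and> (\<forall>q<n. \<forall>a\<in>Alph. \<delta> q a < n)"

definition synchronizing :: "nat \<Rightarrow> 'a set \<Rightarrow> (nat \<Rightarrow> 'a \<Rightarrow> nat) \<Rightarrow> bool" where
  "synchronizing n Alph \<delta> \<longleftrightarrow> (\<exists>w\<in>lists Alph. rk n \<delta> w = 1)"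

(* Matrix of the action of u on w^perp = {x. sum x = 0} w.r.t. the basis
   e_j = q_j - q_{n-1} (j < n-1), acting on row vectors (so rho(uv) = rho u * rho v):
   e_j . u = q_{j.u} - q_{(n-1).u}, whose r-th coordinate is
   [j.u = r] - [(n-1).u = r]. *)
definition rho :: "nat \<Rightarrow> (nat \<Rightarrow> 'a \<Rightarrow> nat) \<Rightarrow> 'a list \<Rightarrow> complex mat" where
  "rho n \<delta> u = mat (n - 1) (n - 1)
     (\<lambda>(j, r). (if act \<delta> j u = r then 1 else 0) - (if act \<delta> (n - 1) u = r then 1 else 0))"

inductive_set gen_alg :: "nat \<Rightarrow> complex mat set \<Rightarrow> complex mat set" for d S where
  gen: "A \<in> S \<Longrightarrow> A \<in> gen_alg d S"
| zero: "0\<^sub>m d d \<in> gen_alg d S"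
| add: "A \<in> gen_alg d S \<Longrightarrow> B \<in> gen_alg d S \<Longrightarrow> A + B \<in> gen_alg d S"
| mult: "A \<in> gen_alg d S \<Longrightarrow> B \<in> gen_alg d S \<Longrightarrow> A * B \<in> gen_alg d S"
| smult: "A \<in> gen_alg d S \<Longrightarrow> c \<cdot>\<^sub>m A \<in> gen_alg d S"

definition jac_rad :: "nat \<Rightarrow> complex mat set \<Rightarrow> complex mat set" where
  "jac_rad d R = {x \<in> R. \<forall>y\<in>R. \<exists>z\<in>R. z * (1\<^sub>m d - y * x) = 1\<^sub>m d}"

(* phi realises an algebra isomorphism R / Rad(R) \<cong> prod_{i<k} M_{ns i}(C):
   phi = (phi 0, ..., phi (k-1)) is a surjective unital algebra homomorphism
   R \<rightarrow> prod_i M_{ns i}(C) whose kernel is Rad(R). *)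
definition wedderburn_iso ::
  "nat \<Rightarrow> complex mat set \<Rightarrow> nat \<Rightarrow> (nat \<Rightarrow> nat) \<Rightarrow> (nat \<Rightarrow> complex mat \<Rightarrow> complex mat) \<Rightarrow> bool" where
  "wedderburn_iso d R k ns \<phi> \<longleftrightarrow>
     (\<forall>i<k. ns i \<ge> 1) \<and>
     (\<forall>i<k. \<forall>A\<in>R. \<phi> i A \<in> carrier_mat (ns i) (ns i)) \<and>
     (\<forall>i<k. \<forall>A\<in>R. \<forall>B\<in>R. \<phi> i (A + B) = \<phi> i A + \<phi> i B \<and> \<phi> i (A * B) = \<phi> i A * \<phi> i B) \<and>
     (\<forall>i<k. \<forall>c. \<forall>A\<in>R. \<phi> i (c \<cdot>\<^sub>m A) = c \<cdot>\<^sub>m \<phi> i A) \<and>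
     (\<forall>i<k. \<phi> i (1\<^sub>m d) = 1\<^sub>m (ns i)) \<and>
     (\<forall>A\<in>R. (\<forall>i<k. \<phi> i A = 0\<^sub>m (ns i) (ns i)) \<longleftrightarrow> A \<in> jac_rad d R) \<and>
     (\<forall>B. (\<forall>i<k. B i \<in> carrier_mat (ns i) (ns i)) \<longrightarrow> (\<exists>A\<in>R. \<forall>i<k. \<phi> i A = B i))"

definition theta :: "nat \<Rightarrow> (nat \<Rightarrow> 'a \<Rightarrow> nat) \<Rightarrow> (nat \<Rightarrow> complex mat \<Rightarrow> complex mat) \<Rightarrow> nat \<Rightarrow> 'a list \<Rightarrow> complex mat" where
  "theta n \<delta> \<phi> i u = \<phi> i (rho n \<delta> u)"

definition supp :: "nat \<Rightarrow> (nat \<Rightarrow> 'a \<Rightarrow> nat) \<Rightarrow> nat \<Rightarrow> (nat \<Rightarrow> nat) \<Rightarrow> (nat \<Rightarrow> complex mat \<Rightarrow> complex mat) \<Rightarrow> 'a list \<Rightarrow> nat set" where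
  "supp n \<delta> k ns \<phi> z = {i. i < k \<and> theta n \<delta> \<phi> i z \<noteq> 0\<^sub>m (ns i) (ns i)}"

definition factor_words :: "'a set \<Rightarrow> 'a list \<Rightarrow> 'a list set" where
  "factor_words Alph v = {x @ v @ y | x y. x \<in> lists Alph \<and> y \<in> lists Alph}"

definition v_minimal :: "nat \<Rightarrow> 'a set \<Rightarrow> (nat \<Rightarrow> 'a \<Rightarrow> nat) \<Rightarrow> nat \<Rightarrow> (nat \<Rightarrow> nat) \<Rightarrow> (nat \<Rightarrow> complex mat \<Rightarrow> complex mat) \<Rightarrow> 'a list \<Rightarrow> 'a list \<Rightarrow> bool" where
  "v_minimal n Alph \<delta> k ns \<phi> v u \<longleftrightarrow>
     u \<in> factor_words Alph v \<and> supp n \<delta> k ns \<phi> u \<noteq> {} \<and>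
     \<not> (\<exists>z\<in>factor_words Alph v. supp n \<delta> k ns \<phi> z \<noteq> {} \<and> supp n \<delta> k ns \<phi> z \<subset> supp n \<delta> k ns \<phi> u)"

definition mon_ideal :: "complex mat set \<Rightarrow> complex mat set \<Rightarrow> bool" where
  "mon_ideal M I \<longleftrightarrow> I \<subseteq> M \<and> I \<noteq> {} \<and> (\<forall>x\<in>M. \<forall>y\<in>I. \<forall>z\<in>M. x * y * z \<in> I)"

definition zero_minimal_ideal :: "complex mat set \<Rightarrow> complex mat \<Rightarrow> complex mat set \<Rightarrow> bool" where
  "zero_minimal_ideal M Z I \<longleftrightarrow> mon_ideal M I \<and> I \<noteq> {Z} \<and>
     (\<forall>J. mon_ideal M J \<and> J \<subseteq> I \<longrightarrow> J = {Z} \<or> J = I)"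

definition I_ideal :: "nat \<Rightarrow> 'a set \<Rightarrow> (nat \<Rightarrow> 'a \<Rightarrow> nat) \<Rightarrow> (nat \<Rightarrow> nat) \<Rightarrow> (nat \<Rightarrow> complex mat \<Rightarrow> complex mat) \<Rightarrow> nat \<Rightarrow> complex mat set" where
  "I_ideal n Alph \<delta> ns \<phi> i =
     (THE I. zero_minimal_ideal (theta n \<delta> \<phi> i ` lists Alph) (0\<^sub>m (ns i) (ns i)) I)"

definition u_represents :: "nat \<Rightarrow> 'a set \<Rightarrow> (nat \<Rightarrow> 'a \<Rightarrow> nat) \<Rightarrow> (nat \<Rightarrow> nat) \<Rightarrow> (nat \<Rightarrow> complex mat \<Rightarrow> complex mat) \<Rightarrow> nat \<Rightarrow> 'a list \<Rightarrow> 'a list \<Rightarrow> complex mat \<Rightarrow> bool" where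
  "u_represents n Alph \<delta> ns \<phi> i u w g \<longleftrightarrow>
     w \<in> factor_words Alph u \<and> theta n \<delta> \<phi> i w = g \<and>
     (g = 0\<^sub>m (ns i) (ns i) \<or>
      (\<forall>w'\<in>factor_words Alph u. theta n \<delta> \<phi> i w' = g \<longrightarrow> rk n \<delta> w \<le> rk n \<delta> w'))"

end

theory Submission
  imports Defs
begin

text \<open>The components \<theta>_i are multiplicative, so a component vanishing on u
  vanishes on every word containing u as a factor: the support can only shrink when a word is
  extended, giving supp w \<subseteq> supp u. If g \<noteq> 0 then i \<in> supp w, and as w also
  contains v as a factor, v-minimality of u rules out a proper inclusion.\<close>

lemma act_append: "act \<delta> q (a @ b) = act \<delta> (act \<delta> q a) b"
  by (simp add: act_def)

lemma act_less:
  assumes "automaton n Alph \<delta>" "a \<in> lists Alph" "q < n"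
  shows "act \<delta> q a < n"
  using assms(2,3)
proof (induction a arbitrary: q rule: rev_induct)
  case Nil
  then show ?case by (simp add: act_def)
next
  case (snoc x xs)
  then show ?case using assms(1) by (simp add: act_def automaton_def)
qed

lemma rho_append:
  assumes A: "automaton n Alph \<delta>" and a: "a \<in> lists Alph"
  shows "rho n \<delta> (a @ b) = rho n \<delta> a * rho n \<delta> b"
proof (rule eq_matI)
  fix j r
  assume "j < dim_row (rho n \<delta> a * rho n \<delta> b)" "r < dim_col (rho n \<delta> a * rho n \<delta> b)"
  then have j: "j < n - 1" and r: "r < n - 1" by (auto simp: rho_def)
  have n1: "n \<ge> 1" using A by (simp add: automaton_def)
  define m where "m = n - 1"
  define F where "F s = (if act \<delta> s b = r then 1 else 0) - (if act \<delta> m b = r then (1::complex) else 0)" for s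
  have eval: "(\<Sum>s<n. (if x = s then 1 else 0) * F s) = F x" if "x < n" for x
  proof -
    have "(\<Sum>s<n. (if x = s then 1 else 0) * F s) = (\<Sum>s<n. if x = s then F s else 0)"
      by (rule sum.cong) auto
    then show ?thesis using that by (simp add: sum.delta)
  qed
  have states: "{..<n} = insert m {..<m}" using n1 by (auto simp: m_def)
  have "(rho n \<delta> a * rho n \<delta> b) $$ (j, r) =
      (\<Sum>s<m. ((if act \<delta> j a = s then 1 else 0) - (if act \<delta> m a = s then 1 else 0)) * F s)"
    using j r by (simp add: rho_def scalar_prod_def F_def m_def lessThan_atLeast0 cong: if_cong)
  also have "\<dots> = (\<Sum>s<n. ((if act \<delta> j a = s then 1 else 0) - (if act \<delta> m a = s then 1 else 0)) * F s)"
    \<comment> \<open>the added term for the last state vanishes because F m = 0\<close>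
    by (simp add: states F_def)
  also have "\<dots> = F (act \<delta> j a) - F (act \<delta> m a)"
    using act_less[OF A a, of j] act_less[OF A a, of m] j n1
    by (simp add: left_diff_distrib sum_subtractf eval m_def)
  also have "\<dots> = rho n \<delta> (a @ b) $$ (j, r)"
    using j r by (simp add: rho_def F_def act_append m_def)
  finally show "rho n \<delta> (a @ b) $$ (j, r) = (rho n \<delta> a * rho n \<delta> b) $$ (j, r)" ..
qed (auto simp: rho_def)

lemma theta_append:
  assumes A: "automaton n Alph \<delta>" and a: "a \<in> lists Alph" and b: "b \<in> lists Alph"
    and W: "wedderburn_iso (n - 1) (gen_alg (n - 1) (rho n \<delta> ` lists Alph)) k ns \<phi>"
    and j: "j < k"
  shows "theta n \<delta> \<phi> j (a @ b) = theta n \<delta> \<phi> j a * theta n \<delta> \<phi> j b"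
proof -
  have "rho n \<delta> a \<in> gen_alg (n - 1) (rho n \<delta> ` lists Alph)"
    and "rho n \<delta> b \<in> gen_alg (n - 1) (rho n \<delta> ` lists Alph)"
    using a b by (auto intro: gen_alg.gen)
  then show ?thesis
    using W j unfolding theta_def rho_append[OF A a] wedderburn_iso_def by blast
qed

lemma theta_carrier:
  assumes W: "wedderburn_iso (n - 1) (gen_alg (n - 1) (rho n \<delta> ` lists Alph)) k ns \<phi>"
    and j: "j < k" and a: "a \<in> lists Alph"
  shows "theta n \<delta> \<phi> j a \<in> carrier_mat (ns j) (ns j)"
proof -
  have "rho n \<delta> a \<in> gen_alg (n - 1) (rho n \<delta> ` lists Alph)"
    using a by (auto intro: gen_alg.gen)
  then show ?thesis
    using W j unfolding theta_def wedderburn_iso_def by blast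
qed

lemma supp_factor_subset:
  assumes A: "automaton n Alph \<delta>"
    and W: "wedderburn_iso (n - 1) (gen_alg (n - 1) (rho n \<delta> ` lists Alph)) k ns \<phi>"
    and a: "a \<in> lists Alph" and u: "u \<in> lists Alph" and b: "b \<in> lists Alph"
  shows "supp n \<delta> k ns \<phi> (a @ u @ b) \<subseteq> supp n \<delta> k ns \<phi> u"
proof
  fix j
  assume j: "j \<in> supp n \<delta> k ns \<phi> (a @ u @ b)"
  then have jk: "j < k" by (simp add: supp_def)
  let ?\<theta> = "theta n \<delta> \<phi> j"
  have factor: "?\<theta> (a @ u @ b) = ?\<theta> a * (?\<theta> u * ?\<theta> b)"
    using theta_append[OF A _ _ W jk] a u b by simp
  show "j \<in> supp n \<delta> k ns \<phi> u"
  proof (rule ccontr)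
    assume "j \<notin> supp n \<delta> k ns \<phi> u"
    then have "?\<theta> u = 0\<^sub>m (ns j) (ns j)" using jk by (simp add: supp_def)
    then have "?\<theta> (a @ u @ b) = 0\<^sub>m (ns j) (ns j)"
      using factor theta_carrier[OF W jk a] theta_carrier[OF W jk b] by simp
    then show False using j by (simp add: supp_def)
  qed
qed

lemma factor_words_trans:
  assumes "u \<in> factor_words Alph v" "w \<in> factor_words Alph u"
  shows "w \<in> factor_words Alph v"
proof -
  obtain x y where "u = x @ v @ y" "x \<in> lists Alph" "y \<in> lists Alph"
    using assms(1) by (auto simp: factor_words_def)
  moreover obtain a b where "w = a @ u @ b" "a \<in> lists Alph" "b \<in> lists Alph"
    using assms(2) by (auto simp: factor_words_def)
  ultimately show ?thesis
    unfolding factor_words_def by (intro CollectI exI[of _ "a @ x"] exI[of _ "y @ b"]) auto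
qed

theorem mainTheorem4:
  fixes n :: nat and Alph :: "'a set" and \<delta> :: "nat \<Rightarrow> 'a \<Rightarrow> nat"
    and k :: nat and ns :: "nat \<Rightarrow> nat" and \<phi> :: "nat \<Rightarrow> complex mat \<Rightarrow> complex mat"
    and v u w :: "'a list" and i :: nat and g :: "complex mat"
  assumes "automaton n Alph \<delta>"
    and "synchronizing n Alph \<delta>"
    and "wedderburn_iso (n - 1) (gen_alg (n - 1) (rho n \<delta> ` lists Alph)) k ns \<phi>"
    and "v \<in> lists Alph"
    and "v_minimal n Alph \<delta> k ns \<phi> v u"
    and "i \<in> supp n \<delta> k ns \<phi> u"
    and "g \<in> I_ideal n Alph \<delta> ns \<phi> i"
    and "u_represents n Alph \<delta> ns \<phi> i u w g"
  shows "(g = theta n \<delta> \<phi> i w \<and> theta n \<delta> \<phi> i w = 0\<^sub>m (ns i) (ns i))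
         \<or> supp n \<delta> k ns \<phi> w = supp n \<delta> k ns \<phi> u"
proof (cases "g = 0\<^sub>m (ns i) (ns i)")
  case True
  then show ?thesis using assms(8) by (simp add: u_represents_def)
next
  case False
  have u_fac: "u \<in> factor_words Alph v" using assms(5) by (simp add: v_minimal_def)
  then have u: "u \<in> lists Alph" using assms(4) by (auto simp: factor_words_def)
  have w_fac: "w \<in> factor_words Alph u" using assms(8) by (simp add: u_represents_def)
  then obtain a b where "w = a @ u @ b" "a \<in> lists Alph" "b \<in> lists Alph"
    by (auto simp: factor_words_def)
  then have shrink: "supp n \<delta> k ns \<phi> w \<subseteq> supp n \<delta> k ns \<phi> u"
    using supp_factor_subset[OF assms(1,3) _ u] by simp
  have "i \<in> supp n \<delta> k ns \<phi> w"
    using assms(6,8) False by (simp add: supp_def u_represents_def)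
  then show ?thesis
    using assms(5) factor_words_trans[OF u_fac w_fac] shrink unfolding v_minimal_def by blast
qed

end
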